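(* Let $\bm v_1, \dots, \bm v_N \in \mathbb{S}^{r-1}$ span $\mathbb{R}^r$, let $\bm V \in \mathbb{R}^{r\times N}$ have the $\bm v_i$ as columns, let $\bm v := \mathrm{vec}(\bm V)$, and let $\bm M^\star \in \mathcal{B}(N,r)$ satisfy $\bm v^\top \bm M^\star \bm v = N^2$. Then every eigenvector of $\bm M^\star$ with nonzero eigenvalue lies in $$V_{\mathrm{sym}} := \{\mathrm{vec}(\bm S \bm V) : \bm S \in \mathbb{R}^{r\times r}_{\mathrm{sym}}\} \subset \mathbb{R}^{rN}.$$ Moreover, $\bm v$ is an eigenvector of $\bm M^\star$ with eigenvalue $N$, and every eigenvector of $\bm M^\star$ with nonzero eigenvalue that is orthogonal to $\bm v$ lies in $$V'_{\mathrm{sym}} := \{\mathrm{vec}(\bm S \bm V) : \bm S \in \mathbb{R}^{r\times r}_{\mathrm{sym}},\ \bm v_i^\top \bm S \bm v_i = 0 \text{ for all } i\in[N]\}.$$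
   Context: $\mathbb{S}^{r-1}$ is the unit sphere in $\mathbb{R}^r$; $\mathbb{R}^{r\times r}_{\mathrm{sym}}$ is the space of symmetric $r\times r$ real matrices. For $\bm V \in \mathbb{R}^{r\times N}$ with columns $\bm v_i$, $\mathrm{vec}(\bm V) \in \mathbb{R}^{rN}$ is the concatenation $(\bm v_1;\dots;\bm v_N)$. A matrix $\bm M \in \mathbb{R}^{rN\times rN}$ is viewed as an $N\times N$ array of $r\times r$ blocks, $\bm M_{[ij]}$ denoting block $(i,j)$. $\mathcal{B}(N,r)$ is the set of symmetric $\bm M \in \mathbb{R}^{rN\times rN}$ with $\bm M \succeq 0$, $\bm M_{[ii]} = \bm I_r$ for all $i$, and $\bm M_{[ij]} = \bm M_{[ij]}^\top$ for all $i,j$. *)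

theory Defs
  imports "HOL-Analysis.Analysis"
begin

text \<open>Dimensions are types: 'r indexes R^r, 'n indexes [N]. A matrix V in R^(r x N)
  is "real^'n^'r" (rows indexed by 'r, columns by 'n). Vectors in R^(rN) are indexed by
  pairs (i,a) with i the column (block) index and a the coordinate within the block,
  so vec(V) $ (i,a) = V $ a $ i.\<close>

definition vecm :: "real^'n^'r \<Rightarrow> real^('n \<times> 'r)" where
  "vecm V = (\<chi> p. V $ snd p $ fst p)"

definition blk :: "real^('n::finite \<times> 'r::finite)^('n \<times> 'r) \<Rightarrow> 'n \<Rightarrow> 'n \<Rightarrow> real^'r^'r" where
  "blk M i j = (\<chi> a b. M $ (i, a) $ (j, b))"

definition psd :: "real^'k^'k \<Rightarrow> bool" where
  "psd M \<longleftrightarrow> (\<forall>x. 0 \<le> x \<bullet> (M *v x))"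

definition Bset :: "(real^('n::finite \<times> 'r::finite)^('n \<times> 'r)) set" where
  "Bset = {M. transpose M = M \<and> psd M \<and> (\<forall>i. blk M i i = mat 1)
              \<and> (\<forall>i j. transpose (blk M i j) = blk M i j)}"

definition Vsym :: "real^'n^'r \<Rightarrow> (real^('n \<times> 'r)) set" where
  "Vsym V = {vecm (S ** V) | S. transpose S = S}"

definition Vsym' :: "real^'n^'r \<Rightarrow> (real^('n \<times> 'r)) set" where
  "Vsym' V = {vecm (S ** V) | S. transpose S = S \<and>
                 (\<forall>i. column i V \<bullet> (S *v column i V) = 0)}"

definition is_eigvec :: "real^'k^'k \<Rightarrow> real^'k \<Rightarrow> real \<Rightarrow> bool" where
  "is_eigvec M x c \<longleftrightarrow> x \<noteq> 0 \<and> M *v x = c *\<^sub>R x"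

end

theory Submission
  imports Defs
begin

text \<open>Testing positive semidefiniteness of \<open>M\<close> on the vector with \<open>a\<close> in block \<open>i\<close> and \<open>-b\<close>
  in block \<open>j\<close> gives \<open>2 a\<^sup>T M\<^sub>i\<^sub>j b \<le> |a|\<^sup>2 + |b|\<^sup>2\<close>, with equality only if that vector lies
  in the kernel of \<open>M\<close>, i.e. \<open>M\<^sub>k\<^sub>i a = M\<^sub>k\<^sub>j b\<close> for all \<open>k\<close>. Since \<open>v\<^sup>T M v\<close> is the sum of the
  \<open>N\<^sup>2\<close> numbers \<open>v\<^sub>i\<^sup>T M\<^sub>i\<^sub>j v\<^sub>j \<le> 1\<close>, the hypothesis \<open>v\<^sup>T M v = N\<^sup>2\<close> forces equality for all
  \<open>a = v\<^sub>i\<close>, \<open>b = v\<^sub>j\<close>; hence \<open>M\<^sub>k\<^sub>i v\<^sub>i = v\<^sub>k\<close> and \<open>M\<^sub>k\<^sub>i v\<^sub>j = M\<^sub>k\<^sub>j v\<^sub>i\<close>.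
  For \<open>x = M w\<close> the matrix \<open>X\<close> whose columns are the blocks of \<open>x\<close> then satisfies
  \<open>v\<^sub>j\<^sup>T X\<^sub>i = v\<^sub>i\<^sup>T X\<^sub>j\<close> and \<open>v\<^sub>i\<^sup>T X\<^sub>i = v\<^sup>T w\<close>; as the \<open>v\<^sub>i\<close> span, \<open>X = S V\<close> with \<open>S\<close> symmetric.
  An eigenvector with eigenvalue \<open>\<lambda> \<noteq> 0\<close> is \<open>M (x / \<lambda>)\<close>, and \<open>x \<bottom> v\<close> makes the diagonal terms
  \<open>v\<^sub>i\<^sup>T S v\<^sub>i = v\<^sup>T x / \<lambda>\<close> vanish.\<close>

lemma inner_matrix_vector_mult_transpose:
  "y \<bullet> (A *v x) = (transpose A *v y) \<bullet> x" for A :: "real^'n^'m"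
  by (metis dot_lmul_matrix transpose_matrix_vector)

lemma psd_quadratic_form_eq_0_imp:
  fixes M :: "real^'k^'k"
  assumes M_sym: "transpose M = M" and "psd M" and "x \<bullet> (M *v x) = 0"
  shows "M *v x = 0"
proof (rule ccontr)
  let ?y = "M *v x"
  assume "?y \<noteq> 0"
  then have a: "?y \<bullet> ?y > 0" by simp
  define b where "b = ?y \<bullet> (M *v ?y)"
  have b: "b \<ge> 0" using \<open>psd M\<close> unfolding psd_def b_def by blast
  define t where "t = (?y \<bullet> ?y) / (b + 1)"
  have t: "t > 0" "t * b \<le> ?y \<bullet> ?y"
    using a b by (simp_all add: t_def field_simps)
  have "x \<bullet> (M *v ?y) = ?y \<bullet> ?y"
    using M_sym by (metis inner_matrix_vector_mult_transpose)
  then have "(x - t *\<^sub>R ?y) \<bullet> (M *v (x - t *\<^sub>R ?y)) = t * (t * b - 2 * (?y \<bullet> ?y))"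
    using assms(3) by (simp add: b_def algebra_simps inner_commute)
  moreover have "0 \<le> (x - t *\<^sub>R ?y) \<bullet> (M *v (x - t *\<^sub>R ?y))"
    using \<open>psd M\<close> unfolding psd_def by blast
  ultimately have "0 \<le> t * b - 2 * (?y \<bullet> ?y)"
    using t by (simp add: zero_le_mult_iff)
  with a t show False by linarith
qed

lemma transpose_matrix_mult_nth: "(transpose A ** B) $ j $ i = column j A \<bullet> column i B"
  by (simp add: matrix_matrix_mult_def transpose_def column_def inner_vec_def)

lemma column_matrix_mult: "column i (A ** B) = A *v column i B"
  by (simp add: vec_eq_iff column_def matrix_matrix_mult_def matrix_vector_mult_def)

lemma transpose_mult_vector_nth: "(transpose V *v y) $ j = column j V \<bullet> y"
  by (simp add: matrix_vector_mult_def transpose_def column_def inner_vec_def)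

lemma columns_span_transpose_mult_eq_0:
  fixes V :: "real^'n^'r"
  assumes "span (columns V) = UNIV" and "transpose V *v y = 0"
  shows "y = 0"
proof -
  have "column j V \<bullet> y = 0" for j
    using assms(2) transpose_mult_vector_nth[of V y j] by simp
  then have "orthogonal y y"
    using assms(1) by (intro orthogonal_to_span[of y "columns V"])
      (auto simp: columns_def orthogonal_def inner_commute)
  then show ?thesis
    by (simp add: orthogonal_self)
qed

lemma ex_symmetric_matrix_mult_eq:
  fixes V X :: "real^'n^'r"
  assumes span: "span (columns V) = UNIV"
    and VX_sym: "transpose V ** X = transpose X ** V"
  shows "\<exists>S. transpose S = S \<and> S ** V = X"
proof -
  define F where "F = V ** transpose V"
  have "c = 0" if "F *v c = 0" for c
  proof -
    have "(transpose V *v c) \<bullet> (transpose V *v c) = c \<bullet> (F *v c)"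
      unfolding F_def matrix_vector_mul_assoc[symmetric]
      by (rule inner_matrix_vector_mult_transpose[symmetric])
    then have "transpose V *v c = 0"
      using that by simp
    then show "c = 0"
      by (rule columns_span_transpose_mult_eq_0[OF span])
  qed
  then obtain G where "G ** F = mat 1"
    using matrix_left_invertible_ker by blast
  moreover from this have "F ** G = mat 1"
    using matrix_left_right_inverse by blast
  ultimately have GF: "G ** V ** transpose V = mat 1" and VG: "V ** transpose V ** G = mat 1"
    by (simp_all add: F_def matrix_mul_assoc)
  have "transpose G = G ** V ** transpose V ** transpose G"
    by (simp add: GF)
  also have "\<dots> = G ** transpose (G ** V ** transpose V)"
    by (simp add: matrix_transpose_mul matrix_mul_assoc)
  finally have G_sym: "transpose G = G"
    by (simp add: GF)
  have X_proj: "X ** (transpose V ** G ** V) = X"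
    unfolding matrix_eq
  proof
    fix c
    define d where "d = c - (transpose V ** G ** V) *v c"
    have "V *v d = 0"
      by (simp add: d_def matrix_vector_mult_diff_distrib matrix_vector_mul_assoc
          matrix_mul_assoc VG)
    have "transpose V *v (X *v d) = transpose X *v (V *v d)"
      by (simp add: matrix_vector_mul_assoc VX_sym)
    then have "transpose V *v (X *v d) = 0"
      using \<open>V *v d = 0\<close> by simp
    then have "X *v d = 0"
      by (rule columns_span_transpose_mult_eq_0[OF span])
    then show "(X ** (transpose V ** G ** V)) *v c = X *v c"
      by (simp add: d_def matrix_vector_mult_diff_distrib matrix_vector_mul_assoc)
  qed
  define S where "S = X ** transpose V ** G"
  have "S ** V = X"
    using X_proj by (simp add: S_def matrix_mul_assoc)
  moreover have "transpose S = S"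
  proof -
    have "S = G ** V ** (transpose V ** X) ** transpose V ** G"
      by (simp add: S_def matrix_mul_assoc GF)
    also have "\<dots> = G ** V ** transpose X ** (V ** transpose V ** G)"
      by (simp add: VX_sym matrix_mul_assoc)
    also have "\<dots> = transpose S"
      by (simp add: VG S_def matrix_transpose_mul G_sym matrix_mul_assoc)
    finally show ?thesis
      by simp
  qed
  ultimately show ?thesis
    by blast
qed

definition blockvec :: "('n::finite \<Rightarrow> real^'r::finite) \<Rightarrow> real^('n \<times> 'r)" where
  "blockvec g = (\<chi> p. g (fst p) $ snd p)"

definition block :: "real^('n::finite \<times> 'r::finite) \<Rightarrow> 'n \<Rightarrow> real^'r" where
  "block x i = (\<chi> a. x $ (i, a))"

lemma block_blockvec [simp]: "block (blockvec g) = g"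
  by (simp add: block_def blockvec_def vec_eq_iff fun_eq_iff)

lemma blockvec_block [simp]: "blockvec (block x) = x"
  by (simp add: block_def blockvec_def vec_eq_iff)

lemma blockvec_eq_iff: "blockvec g = blockvec h \<longleftrightarrow> g = h"
  by (metis block_blockvec)

lemma blockvec_diff: "blockvec g - blockvec h = blockvec (\<lambda>i. g i - h i)"
  by (simp add: blockvec_def vec_eq_iff)

lemma vecm_eq_blockvec: "vecm V = blockvec (\<lambda>i. column i V)"
  by (simp add: vecm_def blockvec_def column_def)

lemma sum_UNIV_prod:
  "(\<Sum>p\<in>UNIV. f p) = (\<Sum>i\<in>UNIV. \<Sum>a\<in>UNIV. f (i, a))"
  for f :: "'a::finite \<times> 'b::finite \<Rightarrow> 'c::comm_monoid_add"
  by (simp flip: UNIV_Times_UNIV add: sum.cartesian_product)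

lemma inner_blockvec: "blockvec g \<bullet> blockvec h = (\<Sum>i\<in>UNIV. g i \<bullet> h i)"
  unfolding inner_vec_def blockvec_def by (simp add: sum_UNIV_prod)

lemma matrix_vector_mult_blockvec:
  "M *v blockvec g = blockvec (\<lambda>i. \<Sum>j\<in>UNIV. blk M i j *v g j)"
  unfolding vec_eq_iff
  by (simp add: matrix_vector_mult_def blockvec_def blk_def sum_UNIV_prod)

lemma inner_blockvec_mult_blockvec:
  "blockvec g \<bullet> (M *v blockvec h) = (\<Sum>i\<in>UNIV. \<Sum>j\<in>UNIV. g i \<bullet> (blk M i j *v h j))"
  by (simp add: matrix_vector_mult_blockvec inner_blockvec inner_sum_right)

lemma transpose_blk: "transpose (blk M i j) = blk (transpose M) j i"
  by (simp add: vec_eq_iff transpose_def blk_def)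

definition single_block :: "'n::finite \<Rightarrow> real^'r::finite \<Rightarrow> real^('n \<times> 'r)" where
  "single_block i a = blockvec (\<lambda>k. if k = i then a else 0)"

lemma inner_single_block: "single_block i a \<bullet> blockvec g = a \<bullet> g i"
proof -
  have "(if k = i then a else 0) \<bullet> g k = (if k = i then a \<bullet> g k else 0)" for k
    by simp
  then show ?thesis
    by (simp add: single_block_def inner_blockvec)
qed

lemma matrix_vector_mult_single_block:
  "M *v single_block i a = blockvec (\<lambda>k. blk M k i *v a)"
  by (simp add: single_block_def matrix_vector_mult_blockvec if_distrib cong: if_cong)

lemma inner_single_block_mult:
  "single_block i a \<bullet> (M *v single_block j b) = a \<bullet> (blk M i j *v b)"
  by (simp add: matrix_vector_mult_single_block inner_single_block)

context
  fixes M :: "real^('n::finite \<times> 'r::finite)^('n \<times> 'r)"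
  assumes M_in_Bset: "M \<in> Bset"
begin

lemma Bset_symmetric: "transpose M = M"
  using M_in_Bset by (simp add: Bset_def)

lemma Bset_psd: "psd M"
  using M_in_Bset by (simp add: Bset_def)

lemma Bset_blk_diag: "blk M i i = mat 1"
  using M_in_Bset by (simp add: Bset_def)

lemma Bset_transpose_blk: "transpose (blk M i j) = blk M i j"
  using M_in_Bset by (simp add: Bset_def)

lemma Bset_blk_commute: "blk M j i = blk M i j"
  using transpose_blk[of M i j] by (simp add: Bset_symmetric Bset_transpose_blk)

lemma Bset_inner_blk_commute: "b \<bullet> (blk M i j *v a) = a \<bullet> (blk M i j *v b)"
  using inner_matrix_vector_mult_transpose[of b "blk M i j" a]
  by (simp add: Bset_transpose_blk inner_commute)

lemma Bset_quadratic_form_single_block_diff: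
  "(single_block i a - single_block j b) \<bullet> (M *v (single_block i a - single_block j b))
     = a \<bullet> a + b \<bullet> b - 2 * (a \<bullet> (blk M i j *v b))"
proof -
  let ?qf = "\<lambda>x y. x \<bullet> (M *v y)"
  have "?qf (single_block i a - single_block j b) (single_block i a - single_block j b)
      = ?qf (single_block i a) (single_block i a) - ?qf (single_block i a) (single_block j b)
        - ?qf (single_block j b) (single_block i a) + ?qf (single_block j b) (single_block j b)"
    by (simp add: matrix_vector_mult_diff_distrib inner_diff_left inner_diff_right)
  also have "\<dots> = a \<bullet> a - a \<bullet> (blk M i j *v b) - b \<bullet> (blk M j i *v a) + b \<bullet> b"
    by (simp only: inner_single_block_mult Bset_blk_diag matrix_vector_mul_lid)
  finally show ?thesis
    by (simp add: Bset_blk_commute[of i j] Bset_inner_blk_commute[of b])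
qed

lemma Bset_inner_blk_le: "2 * (a \<bullet> (blk M i j *v b)) \<le> a \<bullet> a + b \<bullet> b"
proof -
  have "0 \<le> (single_block i a - single_block j b) \<bullet> (M *v (single_block i a - single_block j b))"
    using Bset_psd unfolding psd_def by blast
  then show ?thesis
    by (simp add: Bset_quadratic_form_single_block_diff)
qed

lemma Bset_blk_mult_eq_if_inner_blk_eq:
  assumes "2 * (a \<bullet> (blk M i j *v b)) = a \<bullet> a + b \<bullet> b"
  shows "blk M k i *v a = blk M k j *v b"
proof -
  have "M *v (single_block i a - single_block j b) = 0"
    using assms Bset_quadratic_form_single_block_diff[of i a j b]
    by (intro psd_quadratic_form_eq_0_imp Bset_symmetric Bset_psd) simp
  then have "blockvec (\<lambda>k. blk M k i *v a - blk M k j *v b) = blockvec (\<lambda>k. 0)"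
    by (simp add: matrix_vector_mult_diff_distrib matrix_vector_mult_single_block blockvec_diff)
      (simp add: blockvec_def vec_eq_iff)
  then show ?thesis
    by (simp add: blockvec_eq_iff fun_eq_iff)
qed

end

context
  fixes V :: "real^'n::finite^'r::finite" and M :: "real^('n \<times> 'r)^('n \<times> 'r)"
  assumes M_in_Bset: "M \<in> Bset"
    and unit_columns: "\<And>i. column i V \<bullet> column i V = 1"
    and extremal: "vecm V \<bullet> (M *v vecm V) = (real CARD('n))\<^sup>2"
begin

lemma extremal_inner_blk_columns: "column i V \<bullet> (blk M i j *v column j V) = 1"
proof -
  define q where "q p = column (fst p) V \<bullet> (blk M (fst p) (snd p) *v column (snd p) V)" for p
  have q_le: "q p \<le> 1" for p
    using Bset_inner_blk_le[OF M_in_Bset, of "column (fst p) V" "fst p" "snd p" "column (snd p) V"]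
    by (simp add: q_def unit_columns)
  have "(\<Sum>p\<in>UNIV. q p) = (real CARD('n))\<^sup>2"
    using extremal by (simp add: q_def sum_UNIV_prod vecm_eq_blockvec inner_blockvec_mult_blockvec)
  then have "(\<Sum>p\<in>UNIV. 1 - q p) = 0"
    by (simp add: sum_subtractf power2_eq_square)
  then have "1 - q (i, j) = 0"
    using q_le by (subst (asm) sum_nonneg_eq_0_iff) auto
  then show ?thesis
    by (simp add: q_def)
qed

lemma extremal_blk_mult_column: "blk M k i *v column i V = column k V"
  using Bset_blk_mult_eq_if_inner_blk_eq[OF M_in_Bset, of "column i V" i k "column k V" k]
  by (simp add: extremal_inner_blk_columns unit_columns Bset_blk_diag[OF M_in_Bset])

lemma extremal_blk_mult_column_swap: "blk M k i *v column j V = blk M k j *v column i V"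
  using Bset_blk_mult_eq_if_inner_blk_eq[OF M_in_Bset, of "column j V" i j "column i V" k]
  by (simp add: extremal_inner_blk_columns unit_columns Bset_blk_commute[OF M_in_Bset, of i j])

lemma extremal_mult_vecm: "M *v vecm V = real CARD('n) *\<^sub>R vecm V"
  by (simp add: vecm_eq_blockvec matrix_vector_mult_blockvec extremal_blk_mult_column
      sum_constant_scaleR del: sum_constant)
    (simp add: blockvec_def vec_eq_iff)

lemma extremal_mult_eq_vecm_symmetric:
  assumes span: "span (columns V) = UNIV"
  shows "\<exists>S. transpose S = S \<and> M *v w = vecm (S ** V)
           \<and> (\<forall>i. column i V \<bullet> (S *v column i V) = vecm V \<bullet> w)"
proof -
  define X where "X = block (M *v w)"
  have "M *v w = blockvec (\<lambda>i. \<Sum>l\<in>UNIV. blk M i l *v block w l)"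
    using matrix_vector_mult_blockvec[of M "block w"] by simp
  then have X: "X i = (\<Sum>l\<in>UNIV. blk M i l *v block w l)" for i
    by (simp add: X_def)
  have inner_X: "column j V \<bullet> X i = (\<Sum>l\<in>UNIV. (blk M l i *v column j V) \<bullet> block w l)" for i j
    using Bset_inner_blk_commute[OF M_in_Bset] Bset_blk_commute[OF M_in_Bset]
    by (simp add: X inner_sum_right inner_commute)
  have X_sym: "column j V \<bullet> X i = column i V \<bullet> X j" for i j
    by (simp add: inner_X extremal_blk_mult_column_swap)
  have X_diag: "column i V \<bullet> X i = vecm V \<bullet> w" for i
  proof -
    have "vecm V \<bullet> w = (\<Sum>l\<in>UNIV. column l V \<bullet> block w l)"
      using inner_blockvec[of "\<lambda>l. column l V" "block w"] by (simp add: vecm_eq_blockvec)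
    then show ?thesis
      by (simp add: inner_X extremal_blk_mult_column)
  qed
  define Xm :: "real^'n^'r" where "Xm = (\<chi> a i. X i $ a)"
  have column_Xm: "column i Xm = X i" for i
    by (simp add: Xm_def column_def vec_eq_iff)
  have "transpose V ** Xm = transpose Xm ** V"
    by (simp add: vec_eq_iff transpose_matrix_mult_nth column_Xm) (metis X_sym inner_commute)
  then obtain S where S_sym: "transpose S = S" and SV: "S ** V = Xm"
    using ex_symmetric_matrix_mult_eq[OF span] by blast
  have "vecm (S ** V) = M *v w"
    by (simp add: SV vecm_def Xm_def X_def block_def vec_eq_iff)
  moreover have "S *v column i V = X i" for i
    by (metis SV column_Xm column_matrix_mult)
  ultimately show ?thesis
    using S_sym X_diag by metis
qed

end

theorem lemma2:
  fixes V :: "real^'n^'r" and Mstar :: "real^('n \<times> 'r)^('n \<times> 'r)"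
  assumes unit: "\<forall>i. norm (column i V) = 1"
    and spans: "span (columns V) = UNIV"
    and MB: "Mstar \<in> Bset"
    and val: "vecm V \<bullet> (Mstar *v vecm V) = (real CARD('n))^2"
  shows "(\<forall>x lam. is_eigvec Mstar x lam \<and> lam \<noteq> 0 \<longrightarrow> x \<in> Vsym V)
       \<and> is_eigvec Mstar (vecm V) (real CARD('n))
       \<and> (\<forall>x lam. is_eigvec Mstar x lam \<and> lam \<noteq> 0 \<and> x \<bullet> vecm V = 0 \<longrightarrow> x \<in> Vsym' V)"
proof -
  have unit_columns: "column i V \<bullet> column i V = 1" for i
    using unit by (simp add: norm_eq_1)
  have "vecm V \<bullet> vecm V = real CARD('n)"
    by (simp add: vecm_eq_blockvec inner_blockvec unit_columns)
  then have "is_eigvec Mstar (vecm V) (real CARD('n))"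
    using extremal_mult_vecm[OF MB unit_columns val] by (auto simp: is_eigvec_def)
  moreover have eigvec_symmetric:
    "\<exists>S. transpose S = S \<and> x = vecm (S ** V)
       \<and> (\<forall>i. column i V \<bullet> (S *v column i V) = (vecm V \<bullet> x) / lam)"
    if "is_eigvec Mstar x lam" and "lam \<noteq> 0" for x lam
  proof -
    have "x = Mstar *v ((1 / lam) *\<^sub>R x)"
      using that by (simp add: is_eigvec_def matrix_vector_mult_scaleR)
    then show ?thesis
      using extremal_mult_eq_vecm_symmetric[OF MB unit_columns val spans, of "(1 / lam) *\<^sub>R x"]
      by simp
  qed
  moreover have "x \<in> Vsym' V" if "is_eigvec Mstar x lam" "lam \<noteq> 0" "x \<bullet> vecm V = 0" for x lam
    using eigvec_symmetric[OF that(1,2)] that(3) unfolding Vsym'_def by (auto simp: inner_commute)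
  ultimately show ?thesis
    unfolding Vsym_def by blast
qed

end
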